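(* Let $\mathcal{A}$ be a deterministic learning algorithm and $\bar{\mathcal{A}}_0$ a deterministic update map, and consider the unlearning mechanism with full side information $$\bar{\mathcal{A}}(U,\mathcal{A}(R\cup U),R\cup U)=\bar{\mathcal{A}}_0(U,\mathcal{A}(R\cup U),R\cup U)+\nu,\qquad \nu\sim\mathcal{N}(0,\sigma^2 I_d),$$ where $\nu$ is drawn independently at each call and $\sigma$ may depend on the information available to the mechanism, i.e. on $(U,R\cup U)$ or on $(\emptyset,R)$. If the noise scale is chosen as a function of the retained set only, $$\sigma=\sigma(R)=\frac{\mathrm{RS}_{(\mathcal{A},\bar{\mathcal{A}})}(R)}{\varepsilon}\sqrt{2\log(1.25/\delta)}$$ (so that in the call with inputs $(U,R\cup U)$ one uses $\sigma((R\cup U)\setminus U)=\sigma(R)$), then $(\mathcal{A},\bar{\mathcal{A}})$ satisfies $(\varepsilon,\delta)$-unlearning for every $\varepsilon,\delta\in(0,1)$.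
   Context: Let $\mathcal{Z}$ be a data domain and datasets be finite subsets of $\mathcal{Z}$; outputs lie in $\mathcal{W}\subseteq\mathbb{R}^d$ with the Euclidean norm $\|\cdot\|$. A learning algorithm $\mathcal{A}$ maps a dataset $S$ to $\mathcal{A}(S)\in\mathcal{W}$. An unlearning mechanism $\bar{\mathcal{A}}$ takes a forget set $U\subseteq S$, the learned output $\mathcal{A}(S)$ and side information $T(S)$ (here full information $T(S)=S$) and outputs an element of $\mathcal{W}$; the retain set is $R=S\setminus U$. Two random variables $X,Y$ with values in $\mathcal{W}$ are $(\varepsilon,\delta)$-indistinguishable if for every measurable $W\subseteq\mathcal{W}$, $P(X\in W)\le e^{\varepsilon}P(Y\in W)+\delta$ and $P(Y\in W)\le e^{\varepsilon}P(X\in W)+\delta$. The pair $(\mathcal{A},\bar{\mathcal{A}})$ satisfies $(\varepsilon,\delta)$-unlearning (for single deletions) if for every dataset $R$ of size $n$ and every forget set $U$ with $|U\cup R|\le n+1$, the random outputs $\bar{\mathcal{A}}(U,\mathcal{A}(R\cup U),T(R\cup U))$ and $\bar{\mathcal{A}}(\emptyset,\mathcal{A}(R),T(R))$ are $(\varepsilon,\delta)$-indistinguishable. The retain sensitivity for unlearning of a retained dataset $R$ is $$\mathrm{RS}_{(\mathcal{A},\bar{\mathcal{A}})}(R)=\max_{Z\subseteq\mathcal{Z},\,|Z|=1}\big\|\bar{\mathcal{A}}_0(\emptyset,\mathcal{A}(R),T(R))-\bar{\mathcal{A}}_0(Z,\mathcal{A}(R\cup Z),T(R\cup Z))\big\|.$$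 *)

theory Defs
  imports "HOL-Probability.Probability"
begin

definition std_gauss :: "'a::euclidean_space measure" where
  "std_gauss = density lborel (\<lambda>x. ennreal (\<Prod>b\<in>Basis. std_normal_density (x \<bullet> b)))"

text \<open>Law of c + nu with nu ~ N(0, s^2 I_d) (point mass at c if s = 0).\<close>
definition gauss_at :: "'a::euclidean_space \<Rightarrow> real \<Rightarrow> 'a measure" where
  "gauss_at c s = distr std_gauss borel (\<lambda>x. c + s *\<^sub>R x)"

definition indist :: "real \<Rightarrow> real \<Rightarrow> 'a::euclidean_space measure \<Rightarrow> 'a measure \<Rightarrow> bool" where
  "indist \<epsilon> \<delta> P Q \<longleftrightarrow>
     (\<forall>W \<in> sets borel. measure P W \<le> exp \<epsilon> * measure Q W + \<delta>
                       \<and> measure Q W \<le> exp \<epsilon> * measure P W + \<delta>)"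

text \<open>(eps,delta)-unlearning for single deletions, full side information T(S) = S.
  A : dataset -> output; Abar U w S : forget set, learned output, side information -> output law.\<close>
definition unlearning ::
  "real \<Rightarrow> real \<Rightarrow> ('z set \<Rightarrow> 'a::euclidean_space) \<Rightarrow> ('z set \<Rightarrow> 'a \<Rightarrow> 'z set \<Rightarrow> 'a measure) \<Rightarrow> bool" where
  "unlearning \<epsilon> \<delta> A Abar \<longleftrightarrow>
     (\<forall>R U. finite R \<and> finite U \<and> U \<inter> R = {} \<and> card (U \<union> R) \<le> card R + 1 \<longrightarrow>
        indist \<epsilon> \<delta> (Abar U (A (R \<union> U)) (R \<union> U)) (Abar {} (A R) R))"

text \<open>Retain sensitivity (the max over singletons Z = {z}, written as a supremum).\<close>
definition RS :: "('z set \<Rightarrow> 'a::euclidean_space) \<Rightarrow> ('z set \<Rightarrow> 'a \<Rightarrow> 'z set \<Rightarrow> 'a) \<Rightarrow> 'z set \<Rightarrow> real" where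
  "RS A A0 R = (SUP z. norm (A0 {} (A R) R - A0 {z} (A (R \<union> {z})) (R \<union> {z})))"

definition gauss_mech ::
  "('z set \<Rightarrow> 'a::euclidean_space \<Rightarrow> 'z set \<Rightarrow> 'a) \<Rightarrow> ('z set \<Rightarrow> real) \<Rightarrow> 'z set \<Rightarrow> 'a \<Rightarrow> 'z set \<Rightarrow> 'a measure" where
  "gauss_mech A0 sig U w S = gauss_at (A0 U w S) (sig (S - U))"

end

theory Submission
  imports Defs "HOL-Real_Asymp.Real_Asymp"
begin

text \<open>
  Both calls of the mechanism add noise of the same scale \<open>\<sigma>(R)\<close>, because \<open>\<sigma>\<close> only sees the
  retained set, and a single deletion moves the deterministic update by at most \<open>RS(R)\<close>.
  So it suffices to compare \<open>N(c\<^sub>1, \<sigma>\<^sup>2 I)\<close> and \<open>N(c\<^sub>2, \<sigma>\<^sup>2 I)\<close> with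
  \<open>\<parallel>c\<^sub>1 - c\<^sub>2\<parallel> \<sqrt>(2 ln (1.25/\<delta>)) \<le> \<sigma> \<epsilon>\<close>: the classical Gaussian mechanism. With
  \<open>w = (c\<^sub>1 - c\<^sub>2)/\<sigma>\<close>, the privacy loss at a standardised point \<open>z\<close> is \<open>z \<bullet> w + \<parallel>w\<parallel>\<^sup>2/2\<close>;
  it exceeds \<open>\<epsilon>\<close> only on a half-space, whose standard Gaussian measure is the normal tail at
  \<open>\<epsilon>/\<parallel>w\<parallel> - \<parallel>w\<parallel>/2\<close>, and Mills' ratio bounds that tail by \<open>\<delta>\<close>.
\<close>

section \<open>Tails of the standard normal distribution\<close>

lemma prob_space_std_normal_distribution: "prob_space std_normal_distribution"
  using real_dist_normal_dist by (simp add: real_distribution_def)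

definition std_normal_tail :: "real \<Rightarrow> ennreal" where
  "std_normal_tail T = emeasure std_normal_distribution {T<..}"

lemma std_normal_tail_eq_nn_integral:
  "std_normal_tail T = (\<integral>\<^sup>+x. ennreal (std_normal_density x) * indicator {T<..} x \<partial>lborel)"
  unfolding std_normal_tail_def by (subst emeasure_density) (auto simp: mult.commute)

lemma std_normal_density_le_half: "std_normal_density x \<le> 1/2"
proof -
  have "2 \<le> sqrt (2 * pi)"
    using pi_gt3 by (simp add: real_le_rsqrt)
  then have "1 / sqrt (2 * pi) \<le> 1/2"
    by (simp add: divide_simps)
  moreover have "exp (- x\<^sup>2 / 2) \<le> 1"
    by simp
  ultimately show ?thesis
    unfolding std_normal_density_def
    using mult_mono[of "1 / sqrt (2 * pi)" "1/2" "exp (- x\<^sup>2 / 2)" 1] by simp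
qed

lemma std_normal_tail_antimono: "S \<le> T \<Longrightarrow> std_normal_tail T \<le> std_normal_tail S"
  unfolding std_normal_tail_def by (intro emeasure_mono) auto

text \<open>Mills' ratio: for \<open>x > T\<close>, \<open>\<phi>(x) \<le> x \<phi>(x) / T = - \<phi>'(x) / T\<close>.\<close>
lemma std_normal_tail_le_Mills:
  assumes "0 < T"
  shows "std_normal_tail T \<le> ennreal (std_normal_density T / T)"
proof -
  have "std_normal_tail T \<le> (\<integral>\<^sup>+x. ennreal (x * std_normal_density x / T) * indicator {T..} x \<partial>lborel)"
    unfolding std_normal_tail_eq_nn_integral
  proof (intro nn_integral_mono)
    fix x
    have "std_normal_density x \<le> x * std_normal_density x / T" if "T < x"
    proof -
      have "std_normal_density x * T \<le> std_normal_density x * x"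
        using that by (intro mult_left_mono) auto
      then show ?thesis
        using assms by (simp add: divide_simps mult.commute)
    qed
    then show "ennreal (std_normal_density x) * indicator {T<..} x
        \<le> ennreal (x * std_normal_density x / T) * indicator {T..} x"
      by (simp add: indicator_def ennreal_leI)
  qed
  also have "\<dots> = ennreal (0 - (- std_normal_density T / T))"
  proof (rule nn_integral_FTC_atLeast[where F = "\<lambda>x. - std_normal_density x / T"])
    fix x assume "T \<le> x"
    then show "0 \<le> x * std_normal_density x / T"
      using assms by simp
  next
    fix x
    show "((\<lambda>x. - std_normal_density x / T) has_real_derivative x * std_normal_density x / T) (at x)"
      unfolding std_normal_density_def using assms
      by (auto intro!: derivative_eq_intros simp: field_simps power2_eq_square)
  next
    have "((\<lambda>x::real. exp (- x\<^sup>2 / 2)) \<longlongrightarrow> 0) at_top"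
      by real_asymp
    then have "((\<lambda>x. - (1 / sqrt (2 * pi) * exp (- x\<^sup>2 / 2)) / T) \<longlongrightarrow> - (1 / sqrt (2 * pi) * 0) / T) at_top"
      using assms by (intro tendsto_intros) auto
    then show "((\<lambda>x. - std_normal_density x / T) \<longlongrightarrow> 0) at_top"
      unfolding std_normal_density_def by simp
  qed simp
  finally show ?thesis
    by simp
qed

lemma std_normal_tail_0_le_half: "std_normal_tail 0 \<le> ennreal (1/2)"
proof -
  interpret N: prob_space std_normal_distribution
    by (rule prob_space_std_normal_distribution)
  have "emeasure std_normal_distribution {..<0} = std_normal_tail 0"
  proof -
    have "emeasure std_normal_distribution {..<0}
        = (\<integral>\<^sup>+x. ennreal (std_normal_density x) * indicator {..<0} x \<partial>lborel)"
      by (subst emeasure_density) (auto simp: mult.commute)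
    also have "\<dots> = (\<integral>\<^sup>+x. ennreal (std_normal_density (0 + -1 * x)) * indicator {..<0} (0 + -1 * x) \<partial>lborel)"
      by (subst nn_integral_real_affine[where c = "-1" and t = 0]) auto
    also have "\<dots> = std_normal_tail 0"
      by (simp add: std_normal_tail_eq_nn_integral std_normal_density_def indicator_def)
    finally show ?thesis .
  qed
  then have "N.prob {0<..} = N.prob {..<0}"
    by (simp add: N.emeasure_eq_measure std_normal_tail_def)
  moreover have "N.prob {0<..} + N.prob {..<0} = N.prob ({0<..} \<union> {..<0})"
    by (rule N.finite_measure_Union[symmetric]) auto
  moreover have "N.prob ({0<..} \<union> {..<0}) \<le> 1"
    by (rule N.prob_le_1)
  ultimately have "N.prob {0<..} \<le> 1/2"
    by linarith
  then show ?thesis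
    unfolding std_normal_tail_def N.emeasure_eq_measure by (rule ennreal_leI)
qed

lemma std_normal_tail_nonpos:
  assumes "T \<le> 0"
  shows "std_normal_tail T \<le> ennreal (1/2 - T/2)"
proof -
  have "emeasure std_normal_distribution {T<..0}
      = (\<integral>\<^sup>+x. ennreal (std_normal_density x) * indicator {T<..0} x \<partial>lborel)"
    by (subst emeasure_density) (auto simp: mult.commute)
  also have "\<dots> \<le> (\<integral>\<^sup>+x. ennreal (1/2) * indicator {T<..0} x \<partial>lborel)"
    using ennreal_leI[OF std_normal_density_le_half]
    by (intro nn_integral_mono mult_right_mono) auto
  also have "\<dots> = ennreal (1/2) * ennreal (0 - T)"
    using assms by (simp add: nn_integral_cmult_indicator)
  also have "\<dots> = ennreal (- T/2)"
    using assms by (subst ennreal_mult[symmetric]) auto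
  finally have middle: "emeasure std_normal_distribution {T<..0} \<le> ennreal (- T/2)" .
  have "std_normal_tail T \<le> emeasure std_normal_distribution {T<..0} + std_normal_tail 0"
    unfolding std_normal_tail_def
    using emeasure_subadditive[of "{T<..0}" std_normal_distribution "{0<..}"] assms
    by (simp add: ivl_disj_un_one(5))
  also have "\<dots> \<le> ennreal (- T/2) + ennreal (1/2)"
    using middle std_normal_tail_0_le_half by (rule add_mono)
  also have "\<dots> = ennreal (1/2 - T/2)"
    using assms by (subst ennreal_plus[symmetric]) auto
  finally show ?thesis .
qed

lemma exp_half_le: "exp (1/2 :: real) \<le> 0.75 * sqrt (2 * pi)"
proof (rule power2_le_imp_le)
  have "(exp (1/2 :: real))\<^sup>2 = exp 1"
    by (simp add: power2_eq_square flip: exp_add)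
  also have "\<dots> < 2.72"
    using e_less_272 by simp
  also have "(2.72 :: real) \<le> 0.5625 * (2 * pi)"
    using pi_gt3 by simp
  also have "\<dots> = (0.75 * sqrt (2 * pi))\<^sup>2"
    by (simp add: power_mult_distrib power_divide)
  finally show "(exp (1/2 :: real))\<^sup>2 \<le> (0.75 * sqrt (2 * pi))\<^sup>2"
    by (rule less_imp_le)
qed simp

lemma std_normal_tail_le_exp:
  assumes "0.6 \<le> T" and "2 * L - 1 \<le> T\<^sup>2"
  shows "std_normal_tail T \<le> ennreal (1.25 * exp (- L))"
proof -
  have "std_normal_density T / T \<le> std_normal_density T / 0.6"
    using assms(1) by (intro divide_left_mono) auto
  also have "\<dots> = exp (- T\<^sup>2 / 2) / (0.6 * sqrt (2 * pi))"
    by (simp add: std_normal_density_def)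
  also have "\<dots> \<le> exp (1/2 - L) / (0.6 * sqrt (2 * pi))"
    using assms(2) by (intro divide_right_mono) auto
  also have "\<dots> = exp (1/2) / (0.75 * sqrt (2 * pi)) * (1.25 * exp (- L))"
    by (simp only: exp_diff) (simp add: exp_minus field_simps)
  also have "\<dots> \<le> 1.25 * exp (- L)"
    using exp_half_le by (intro mult_left_le_one_le) (auto simp: divide_le_eq_1)
  finally have "ennreal (std_normal_density T / T) \<le> ennreal (1.25 * exp (- L))"
    by (rule ennreal_leI)
  moreover have "std_normal_tail T \<le> ennreal (std_normal_density T / T)"
    using assms(1) by (intro std_normal_tail_le_Mills) simp
  ultimately show ?thesis
    by (rule order_trans[rotated])
qed

lemma std_normal_tail_threshold_le_exp:
  assumes "4/3 \<le> c\<^sup>2" "0 < c" and T: "c - 1 / (2 * c) \<le> T"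
  shows "std_normal_tail T \<le> ennreal (1.25 * exp (- (c\<^sup>2 / 2)))"
proof -
  have "1.1\<^sup>2 \<le> c\<^sup>2"
    using assms(1) by (simp add: power2_eq_square)
  then have "1.1 \<le> c"
    by (rule power2_le_imp_le) (use assms(2) in simp)
  moreover from this have "1 / (2 * c) \<le> 1/2"
    by (simp add: field_simps)
  ultimately have "0.6 \<le> c - 1 / (2 * c)"
    by linarith
  moreover have "c\<^sup>2 - 1 \<le> (c - 1 / (2 * c))\<^sup>2"
    using assms(2) by (simp add: power2_eq_square field_simps)
  ultimately have "0.6 \<le> T" and "2 * (c\<^sup>2 / 2) - 1 \<le> T\<^sup>2"
    using T power_mono[OF T, of 2] by linarith+
  then show ?thesis
    by (rule std_normal_tail_le_exp)
qed

lemma std_normal_tail_threshold_le_five_eighths: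
  assumes "2/5 \<le> c\<^sup>2" "0 < c" and T: "c - 1 / (2 * c) \<le> T"
  shows "std_normal_tail T \<le> ennreal (5/8)"
proof -
  have "0.6\<^sup>2 \<le> c\<^sup>2"
    using assms(1) by (simp add: power2_eq_square)
  then have "0.6 \<le> c"
    by (rule power2_le_imp_le) (use assms(2) in simp)
  then have "1 \<le> 2 * c\<^sup>2 + c / 2"
    using assms(1) by simp
  then have "- 1/4 \<le> c - 1 / (2 * c)"
    using assms(2) by (simp add: field_simps power2_eq_square)
  then have "std_normal_tail T \<le> std_normal_tail (- 1/4)"
    using T by (intro std_normal_tail_antimono) simp
  also have "\<dots> \<le> ennreal (1/2 - (- 1/4) / 2)"
    by (rule std_normal_tail_nonpos) simp
  finally show ?thesis
    by simp
qed

text \<open>For \<open>\<delta> < 5/8\<close> the threshold is at least \<open>0.6\<close> and Mills' ratio applies; for larger \<open>\<delta>\<close>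
  the threshold is at least \<open>-1/4\<close>, where the crude bound \<open>5/8\<close> suffices.\<close>
lemma std_normal_tail_le_delta:
  fixes \<delta> T :: real
  defines "c \<equiv> sqrt (2 * ln (1.25 / \<delta>))"
  assumes "0 < \<delta>" "\<delta> < 1" and T: "c - 1 / (2 * c) \<le> T"
  shows "std_normal_tail T \<le> ennreal \<delta>"
proof -
  define L where "L = ln (1.25 / \<delta>)"
  have "- ln (0.8 * \<delta>) = L"
    using assms(2) by (simp add: L_def ln_div ln_mult)
  then have L_ge: "1/5 \<le> L"
    using ln_le_minus_one[of "0.8 * \<delta>"] assms(2,3) by simp
  have c_sq: "c\<^sup>2 = 2 * L" and c_pos: "0 < c"
    using L_ge by (auto simp: c_def L_def)
  show ?thesis
  proof (cases "\<delta> < 5/8")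
    case True
    have "ln 2 \<le> L"
      unfolding L_def using True assms(2) by (subst ln_le_cancel_iff) (auto simp: field_simps)
    then have "4/3 \<le> c\<^sup>2"
      using ln2_ge_two_thirds c_sq by linarith
    then have "std_normal_tail T \<le> ennreal (1.25 * exp (- (c\<^sup>2 / 2)))"
      using c_pos T by (rule std_normal_tail_threshold_le_exp)
    also have "1.25 * exp (- (c\<^sup>2 / 2)) = \<delta>"
      using assms(2) by (simp add: c_sq L_def exp_minus)
    finally show ?thesis .
  next
    case False
    have "std_normal_tail T \<le> ennreal (5/8)"
      using L_ge c_sq c_pos T by (intro std_normal_tail_threshold_le_five_eighths) auto
    also have "\<dots> \<le> ennreal \<delta>"
      using False by (intro ennreal_leI) simp
    finally show ?thesis .
  qed
qed

section \<open>The standard Gaussian on a Euclidean space\<close>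

lemma PiM_std_normal_eq_density:
  assumes "finite I"
  shows "density (\<Pi>\<^sub>M i\<in>I. lborel) (\<lambda>f. \<Prod>i\<in>I. ennreal (std_normal_density (f i)))
    = (\<Pi>\<^sub>M i\<in>I. std_normal_distribution)"
proof (rule product_sigma_finite.PiM_eqI)
  show "product_sigma_finite (\<lambda>_. std_normal_distribution)"
    unfolding product_sigma_finite_def
    using prob_space_std_normal_distribution prob_space_imp_sigma_finite by blast
  show "sets (density (\<Pi>\<^sub>M i\<in>I. lborel) (\<lambda>f. \<Prod>i\<in>I. ennreal (std_normal_density (f i))))
      = sets (\<Pi>\<^sub>M i\<in>I. std_normal_distribution)"
    unfolding sets_density by (rule sets_PiM_cong) simp_all
  fix A assume A: "\<And>i. i \<in> I \<Longrightarrow> A i \<in> sets std_normal_distribution"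
  have "Pi\<^sub>E I A \<in> sets (\<Pi>\<^sub>M i\<in>I. lborel)"
    using A by (intro sets_PiM_I_finite assms) auto
  then have "emeasure (density (\<Pi>\<^sub>M i\<in>I. lborel) (\<lambda>f. \<Prod>i\<in>I. ennreal (std_normal_density (f i)))) (Pi\<^sub>E I A)
      = (\<integral>\<^sup>+f. (\<Prod>i\<in>I. ennreal (std_normal_density (f i))) * indicator (Pi\<^sub>E I A) f \<partial>(\<Pi>\<^sub>M i\<in>I. lborel))"
    by (subst emeasure_density) auto
  also have "\<dots> = (\<integral>\<^sup>+f. (\<Prod>i\<in>I. ennreal (std_normal_density (f i)) * indicator (A i) (f i)) \<partial>(\<Pi>\<^sub>M i\<in>I. lborel))"
  proof (intro nn_integral_cong)
    fix f assume "f \<in> space (\<Pi>\<^sub>M i\<in>I. (lborel :: real measure))"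
    then have "f \<in> extensional I"
      by (simp add: space_PiM PiE_def)
    then have "indicator (Pi\<^sub>E I A) f = (\<Prod>i\<in>I. indicator (A i) (f i) :: ennreal)"
      by (auto simp: indicator_def PiE_def Pi_def assms)
    then show "(\<Prod>i\<in>I. ennreal (std_normal_density (f i))) * indicator (Pi\<^sub>E I A) f
        = (\<Prod>i\<in>I. ennreal (std_normal_density (f i)) * indicator (A i) (f i))"
      by (simp add: prod.distrib)
  qed
  also have "\<dots> = (\<Prod>i\<in>I. \<integral>\<^sup>+x. ennreal (std_normal_density x) * indicator (A i) x \<partial>lborel)"
    using A assms
    by (subst product_sigma_finite.product_nn_integral_prod)
       (auto simp: product_sigma_finite_def sigma_finite_lborel)
  also have "\<dots> = (\<Prod>i\<in>I. emeasure std_normal_distribution (A i))"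
    using A by (intro prod.cong refl) (simp add: emeasure_density mult.commute)
  finally show "emeasure (density (\<Pi>\<^sub>M i\<in>I. lborel) (\<lambda>f. \<Prod>i\<in>I. ennreal (std_normal_density (f i)))) (Pi\<^sub>E I A)
      = (\<Prod>i\<in>I. emeasure std_normal_distribution (A i))" .
qed (use assms in simp)

definition std_gauss_density :: "'a::euclidean_space \<Rightarrow> real" where
  "std_gauss_density y = (\<Prod>b\<in>Basis. std_normal_density (y \<bullet> b))"

lemma std_gauss_density_nonneg: "0 \<le> std_gauss_density y"
  unfolding std_gauss_density_def by (intro prod_nonneg) auto

lemma borel_measurable_std_gauss_density[measurable]: "std_gauss_density \<in> borel_measurable borel"
  unfolding std_gauss_density_def by measurable

lemma std_gauss_eq_density: "std_gauss = density lborel (\<lambda>x. ennreal (std_gauss_density x))"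
  unfolding std_gauss_def std_gauss_density_def ..

lemma std_gauss_eq_distr_PiM:
  "(std_gauss :: 'a::euclidean_space measure)
    = distr (\<Pi>\<^sub>M b\<in>Basis. std_normal_distribution) borel (\<lambda>f. \<Sum>b\<in>Basis. f b *\<^sub>R b)"
proof -
  have coord: "(\<Sum>b'\<in>Basis. f b' *\<^sub>R b') \<bullet> b = f b" if "b \<in> (Basis :: 'a set)" for f b
    using that by (simp add: inner_sum_left inner_Basis if_distrib cong: if_cong)
  have "(std_gauss :: 'a measure)
      = density (distr (\<Pi>\<^sub>M b\<in>Basis. lborel) borel (\<lambda>f. \<Sum>b\<in>Basis. f b *\<^sub>R b)) (\<lambda>x. ennreal (std_gauss_density x))"
    unfolding std_gauss_eq_density by (simp flip: lborel_eq)
  also have "\<dots> = distr (density (\<Pi>\<^sub>M b\<in>Basis. lborel) (\<lambda>f. ennreal (std_gauss_density (\<Sum>b\<in>Basis. f b *\<^sub>R b))))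
      borel (\<lambda>f. \<Sum>b\<in>Basis. f b *\<^sub>R b)"
    by (rule density_distr) measurable
  also have "density (\<Pi>\<^sub>M b\<in>(Basis :: 'a set). lborel) (\<lambda>f. ennreal (std_gauss_density (\<Sum>b\<in>Basis. f b *\<^sub>R b)))
      = density (\<Pi>\<^sub>M b\<in>Basis. lborel) (\<lambda>f. \<Prod>b\<in>Basis. ennreal (std_normal_density (f b)))"
    by (intro density_cong) (auto simp: std_gauss_density_def coord prod_ennreal)
  also have "\<dots> = (\<Pi>\<^sub>M b\<in>Basis. std_normal_distribution)"
    by (rule PiM_std_normal_eq_density) simp
  finally show ?thesis .
qed

lemma prob_space_std_gauss: "prob_space (std_gauss :: 'a::euclidean_space measure)"
proof -
  have "prob_space (\<Pi>\<^sub>M b\<in>(Basis :: 'a set). std_normal_distribution)"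
    by (rule prob_space_PiM) (rule prob_space_std_normal_distribution)
  then show ?thesis
    unfolding std_gauss_eq_distr_PiM by (rule prob_space.prob_space_distr) measurable
qed

lemma prob_space_gauss_at: "prob_space (gauss_at (c :: 'a::euclidean_space) s)"
  unfolding gauss_at_def
  by (rule prob_space.prob_space_distr[OF prob_space_std_gauss])
     (simp add: measurable_cong_sets[of std_gauss borel] std_gauss_def)

lemma indep_vars_PiM_components:
  assumes "\<And>i. i \<in> I \<Longrightarrow> prob_space (M i)"
  shows "prob_space.indep_vars (\<Pi>\<^sub>M i\<in>I. M i) M (\<lambda>i f. f i) I"
proof -
  interpret P: prob_space "\<Pi>\<^sub>M i\<in>I. M i"
    using assms by (rule prob_space_PiM)
  show ?thesis
  proof (cases "I = {}")
    case True
    then show ?thesis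
      unfolding P.indep_vars_def P.indep_sets_def by simp
  next
    case False
    have "distr (\<Pi>\<^sub>M i\<in>I. M i) (\<Pi>\<^sub>M i\<in>I. M i) (\<lambda>f. \<lambda>i\<in>I. f i)
        = distr (\<Pi>\<^sub>M i\<in>I. M i) (\<Pi>\<^sub>M i\<in>I. M i) (\<lambda>f. f)"
      by (rule distr_cong) (auto simp: space_PiM PiE_def extensional_restrict)
    also have "\<dots> = (\<Pi>\<^sub>M i\<in>I. distr (\<Pi>\<^sub>M i\<in>I. M i) (M i) (\<lambda>f. f i))"
      using assms by (auto intro!: PiM_cong simp: distr_PiM_component)
    finally show ?thesis
      using False by (subst P.indep_vars_iff_distr_eq_PiM') simp_all
  qed
qed

lemma distributed_PiM_std_normal_linear:
  assumes "finite I" and "\<exists>i\<in>I. a i \<noteq> 0"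
  shows "distributed (\<Pi>\<^sub>M i\<in>I. std_normal_distribution) lborel (\<lambda>f. \<Sum>i\<in>I. a i * f i)
    (normal_density 0 (sqrt (\<Sum>i\<in>I. (a i)\<^sup>2)))"
proof -
  let ?P = "\<Pi>\<^sub>M i\<in>I. std_normal_distribution"
  interpret P: prob_space ?P
    by (intro prob_space_PiM prob_space_std_normal_distribution)
  define J where "J = {i\<in>I. a i \<noteq> 0}"
  have J: "finite J" "J \<noteq> {}" "J \<subseteq> I"
    using assms by (auto simp: J_def)
  have "distributed ?P lborel (\<lambda>f. f i) std_normal_density" if "i \<in> I" for i
    unfolding distributed_def
  proof (intro conjI)
    show "distr ?P lborel (\<lambda>f. f i) = std_normal_distribution"
      using that prob_space_std_normal_distribution
      by (subst distr_PiM_component[symmetric]) (auto intro!: distr_cong)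
    show "(\<lambda>f. f i) \<in> measurable ?P lborel"
      using measurable_component_singleton[OF that, of "\<lambda>_. std_normal_distribution"]
      by (simp add: measurable_cong_sets[of ?P ?P lborel std_normal_distribution])
  qed simp
  then have normal: "distributed ?P lborel (\<lambda>f. a i * f i) (normal_density 0 \<bar>a i\<bar>)" if "i \<in> J" for i
    using that P.normal_density_affine[of "\<lambda>f. f i" 0 1 "a i" 0] J by (auto simp: J_def)
  have "P.indep_vars (\<lambda>_. std_normal_distribution) (\<lambda>i f. f i) I"
    by (rule indep_vars_PiM_components) (rule prob_space_std_normal_distribution)
  then have "P.indep_vars (\<lambda>_. borel) (\<lambda>i f. a i * f i) I"
    by (rule P.indep_vars_compose2[where Y = "\<lambda>i x. a i * x"]) simp
  then have "P.indep_vars (\<lambda>_. borel) (\<lambda>i f. a i * f i) J"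
    using J(3) by (rule P.indep_vars_subset)
  then have "distributed ?P lborel (\<lambda>f. \<Sum>i\<in>J. a i * f i) (normal_density (\<Sum>i\<in>J. 0) (sqrt (\<Sum>i\<in>J. \<bar>a i\<bar>\<^sup>2)))"
    using J normal by (intro P.sum_indep_normal) (auto simp: J_def)
  moreover have "(\<Sum>i\<in>J. a i * f i) = (\<Sum>i\<in>I. a i * f i)" for f
    unfolding J_def using assms(1) by (intro sum.mono_neutral_left) auto
  moreover have "(\<Sum>i\<in>J. \<bar>a i\<bar>\<^sup>2) = (\<Sum>i\<in>I. (a i)\<^sup>2)"
    unfolding J_def power2_abs using assms(1) by (intro sum.mono_neutral_left) auto
  ultimately show ?thesis
    by simp
qed

lemma emeasure_std_gauss_halfspace:
  fixes w :: "'a::euclidean_space"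
  assumes "w \<noteq> 0"
  shows "emeasure std_gauss {y. t < y \<bullet> w} = std_normal_tail (t / norm w)"
proof -
  let ?P = "\<Pi>\<^sub>M b\<in>(Basis :: 'a set). std_normal_distribution"
  interpret P: prob_space ?P
    by (intro prob_space_PiM prob_space_std_normal_distribution)
  define S where "S f = (\<Sum>b\<in>Basis. (w \<bullet> b) * f b)" for f :: "'a \<Rightarrow> real"
  have "(\<Sum>b\<in>Basis. f b *\<^sub>R b) \<bullet> w = S f" for f
    unfolding S_def inner_sum_left by (simp add: inner_commute mult.commute)
  then have "emeasure std_gauss {y. t < y \<bullet> w} = emeasure ?P (S -` {t<..} \<inter> space ?P)"
    unfolding std_gauss_eq_distr_PiM by (subst emeasure_distr) (auto intro!: arg_cong2[where f = emeasure])
  also have "S -` {t<..} \<inter> space ?P = (\<lambda>f. 0 + 1 / norm w * S f) -` {t / norm w<..} \<inter> space ?P"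
    using assms by (auto simp: divide_simps mult.commute)
  also have "emeasure ?P \<dots> = std_normal_tail (t / norm w)"
  proof -
    have "\<exists>b\<in>Basis. w \<bullet> b \<noteq> 0"
      using assms euclidean_all_zero_iff by blast
    moreover have "sqrt (\<Sum>b\<in>Basis. (w \<bullet> b)\<^sup>2) = norm w"
      by (simp add: norm_eq_sqrt_inner euclidean_inner[of w w] power2_eq_square)
    ultimately have "distributed ?P lborel S (normal_density 0 (norm w))"
      unfolding S_def using distributed_PiM_std_normal_linear[of Basis "\<lambda>b. w \<bullet> b"] by simp
    then have "distributed ?P lborel (\<lambda>f. 0 + 1 / norm w * S f) std_normal_density"
      using P.normal_density_affine[of S 0 "norm w" "1 / norm w" 0] assms by simp
    then show ?thesis
      unfolding std_normal_tail_eq_nn_integral by (subst distributed_emeasure) auto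
  qed
  finally show ?thesis .
qed

section \<open>The Gaussian mechanism\<close>

lemma std_normal_density_shift:
  "std_normal_density a = std_normal_density (a + b) * exp (a * b + b\<^sup>2 / 2)"
proof -
  have "- a\<^sup>2 / 2 = - (a + b)\<^sup>2 / 2 + (a * b + b\<^sup>2 / 2)"
    by (simp add: power2_eq_square field_simps)
  then show ?thesis
    unfolding std_normal_density_def by (simp flip: exp_add)
qed

lemma std_gauss_density_shift:
  "std_gauss_density z = std_gauss_density (z + w) * exp (z \<bullet> w + (norm w)\<^sup>2 / 2)"
proof -
  have "std_gauss_density z
      = (\<Prod>b\<in>Basis. std_normal_density ((z + w) \<bullet> b) * exp ((z \<bullet> b) * (w \<bullet> b) + (w \<bullet> b)\<^sup>2 / 2))"
    unfolding std_gauss_density_def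
    by (intro prod.cong refl) (simp add: std_normal_density_shift[of "z \<bullet> b" "w \<bullet> b" for b] inner_add_left)
  also have "\<dots> = std_gauss_density (z + w) * exp (\<Sum>b\<in>Basis. (z \<bullet> b) * (w \<bullet> b) + (w \<bullet> b)\<^sup>2 / 2)"
    by (simp add: std_gauss_density_def prod.distrib exp_sum)
  also have "(\<Sum>b\<in>Basis. (z \<bullet> b) * (w \<bullet> b) + (w \<bullet> b)\<^sup>2 / 2) = z \<bullet> w + (w \<bullet> w) / 2"
    by (simp add: sum.distrib euclidean_inner[of z w] euclidean_inner[of w w] power2_eq_square
        sum_divide_distrib)
  finally show ?thesis
    by (simp add: power2_norm_eq_inner)
qed

lemma nn_integral_lborel_shift:
  fixes w :: "'a::euclidean_space"
  assumes [measurable]: "f \<in> borel_measurable borel"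
  shows "(\<integral>\<^sup>+y. f y \<partial>lborel) = (\<integral>\<^sup>+z. f (w + z) \<partial>lborel)"
  by (subst lborel_distr_plus[symmetric, of w]) (simp add: nn_integral_distr)

lemma emeasure_gauss_at:
  fixes c :: "'a::euclidean_space"
  assumes [measurable]: "W \<in> sets borel"
  shows "emeasure (gauss_at c s) W
    = (\<integral>\<^sup>+y. ennreal (std_gauss_density y) * indicator {y. c + s *\<^sub>R y \<in> W} y \<partial>lborel)"
proof -
  have "emeasure (gauss_at c s) W = emeasure std_gauss {y. c + s *\<^sub>R y \<in> W}"
    unfolding gauss_at_def by (subst emeasure_distr) (auto simp: std_gauss_def vimage_def)
  then show ?thesis
    unfolding std_gauss_eq_density by (simp add: emeasure_density)
qed

text \<open>The privacy loss \<open>ln (\<phi>(z) / \<phi>(z + w)) = z \<bullet> w + \<parallel>w\<parallel>\<^sup>2 / 2\<close> exceeds \<open>\<epsilon>\<close> only on the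
  half-space in the last summand.\<close>
lemma emeasure_gauss_at_le_privacy_loss:
  fixes c1 c2 :: "'a::euclidean_space"
  assumes "s \<noteq> 0" and [measurable]: "W \<in> sets borel"
  defines "w \<equiv> (1 / s) *\<^sub>R (c1 - c2)"
  shows "emeasure (gauss_at c1 s) W
    \<le> ennreal (exp \<epsilon>) * emeasure (gauss_at c2 s) W + emeasure std_gauss {z. \<epsilon> - (norm w)\<^sup>2 / 2 < z \<bullet> w}"
proof -
  define S where "S = {y. c1 + s *\<^sub>R y \<in> W}"
  define B where "B = {z. \<epsilon> - (norm w)\<^sup>2 / 2 < z \<bullet> w}"
  have [measurable]: "S \<in> sets borel" "B \<in> sets borel"
    unfolding S_def B_def by measurable
  have "emeasure (gauss_at c2 s) W
      = (\<integral>\<^sup>+z. ennreal (std_gauss_density (w + z)) * indicator {y. c2 + s *\<^sub>R y \<in> W} (w + z) \<partial>lborel)"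
    unfolding emeasure_gauss_at[OF assms(2)] by (rule nn_integral_lborel_shift) measurable
  also have "\<dots> = (\<integral>\<^sup>+z. ennreal (std_gauss_density (z + w)) * indicator S z \<partial>lborel)"
    using assms(1) by (intro nn_integral_cong) (simp add: w_def S_def scaleR_add_right add.commute indicator_def)
  finally have c2_eq: "emeasure (gauss_at c2 s) W = \<dots>" .
  have pointwise: "ennreal (std_gauss_density z) * indicator S z
      \<le> ennreal (exp \<epsilon>) * (ennreal (std_gauss_density (z + w)) * indicator S z)
        + ennreal (std_gauss_density z) * indicator B z" for z
  proof (cases "z \<in> B")
    case False
    then have "std_gauss_density z \<le> std_gauss_density (z + w) * exp \<epsilon>"
      using std_gauss_density_shift[of z w] std_gauss_density_nonneg[of "z + w"]
      by (simp add: B_def mult_left_mono)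
    then show ?thesis
      using False by (auto simp: indicator_def ennreal_mult'[symmetric] mult.commute intro: ennreal_leI)
  qed (auto simp: indicator_def)
  have "emeasure (gauss_at c1 s) W = (\<integral>\<^sup>+z. ennreal (std_gauss_density z) * indicator S z \<partial>lborel)"
    unfolding S_def by (rule emeasure_gauss_at) fact
  also have "\<dots> \<le> ennreal (exp \<epsilon>) * (\<integral>\<^sup>+z. ennreal (std_gauss_density (z + w)) * indicator S z \<partial>lborel)
      + (\<integral>\<^sup>+z. ennreal (std_gauss_density z) * indicator B z \<partial>lborel)"
    using pointwise by (subst nn_integral_cmult[symmetric], simp, subst nn_integral_add[symmetric])
      (auto intro!: nn_integral_mono)
  also have "(\<integral>\<^sup>+z. ennreal (std_gauss_density z) * indicator B z \<partial>lborel) = emeasure std_gauss B"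
    unfolding std_gauss_eq_density by (simp add: emeasure_density)
  finally show ?thesis
    unfolding c2_eq B_def .
qed

lemma measure_gauss_at_le:
  fixes c1 c2 :: "'a::euclidean_space"
  assumes "0 < s" "\<epsilon> < 1" "0 < \<delta>" "\<delta> < 1" "c1 \<noteq> c2"
    and sens: "norm (c1 - c2) * sqrt (2 * ln (1.25 / \<delta>)) \<le> s * \<epsilon>"
    and "W \<in> sets borel"
  shows "measure (gauss_at c1 s) W \<le> exp \<epsilon> * measure (gauss_at c2 s) W + \<delta>"
proof -
  interpret P1: prob_space "gauss_at c1 s" by (rule prob_space_gauss_at)
  interpret P2: prob_space "gauss_at c2 s" by (rule prob_space_gauss_at)
  define c where "c = sqrt (2 * ln (1.25 / \<delta>))"
  define w where "w = (1 / s) *\<^sub>R (c1 - c2)"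
  have c_pos: "0 < c"
    using assms(3,4) by (simp add: c_def field_simps)
  have w_pos: "0 < norm w"
    using assms(1,5) by (simp add: w_def)
  have "norm w * c = norm (c1 - c2) * c / s"
    using assms(1) by (simp add: w_def)
  also have "\<dots> \<le> s * \<epsilon> / s"
    using sens assms(1) by (intro divide_right_mono) (auto simp: c_def)
  finally have w_c: "norm w * c \<le> \<epsilon>"
    using assms(1) by simp
  have "c - 1 / (2 * c) \<le> \<epsilon> / norm w - norm w / 2"
  proof -
    have "c \<le> \<epsilon> / norm w"
      using w_c w_pos by (simp add: field_simps)
    moreover have "norm w / 2 \<le> 1 / (2 * c)"
      using w_c assms(2) c_pos by (simp add: field_simps)
    ultimately show ?thesis
      by linarith
  qed
  also have "\<epsilon> / norm w - norm w / 2 = (\<epsilon> - (norm w)\<^sup>2 / 2) / norm w"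
    using w_pos by (simp add: field_simps power2_eq_square)
  finally have "std_normal_tail ((\<epsilon> - (norm w)\<^sup>2 / 2) / norm w) \<le> ennreal \<delta>"
    unfolding c_def by (rule std_normal_tail_le_delta[OF assms(3,4)])
  then have "emeasure std_gauss {z. \<epsilon> - (norm w)\<^sup>2 / 2 < z \<bullet> w} \<le> ennreal \<delta>"
    using w_pos by (simp add: emeasure_std_gauss_halfspace)
  moreover have "emeasure (gauss_at c1 s) W
      \<le> ennreal (exp \<epsilon>) * emeasure (gauss_at c2 s) W + emeasure std_gauss {z. \<epsilon> - (norm w)\<^sup>2 / 2 < z \<bullet> w}"
    unfolding w_def using assms(1,7) by (intro emeasure_gauss_at_le_privacy_loss) auto
  ultimately have "emeasure (gauss_at c1 s) W \<le> ennreal (exp \<epsilon>) * emeasure (gauss_at c2 s) W + ennreal \<delta>"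
    by (meson add_left_mono order_trans)
  also have "\<dots> = ennreal (exp \<epsilon> * measure (gauss_at c2 s) W + \<delta>)"
    using assms(3) by (simp add: P2.emeasure_eq_measure ennreal_mult')
  finally show ?thesis
    using assms(3) by (simp add: P1.emeasure_eq_measure del: ennreal_plus)
qed

lemma indist_refl:
  assumes "0 \<le> \<epsilon>" "0 \<le> \<delta>"
  shows "indist \<epsilon> \<delta> P P"
proof -
  have "measure P W \<le> exp \<epsilon> * measure P W + \<delta>" for W
    using assms mult_right_mono[of 1 "exp \<epsilon>" "measure P W"] by simp
  then show ?thesis
    unfolding indist_def by simp
qed

lemma indist_gauss_at:
  fixes c1 c2 :: "'a::euclidean_space"
  assumes "0 \<le> s" "0 < \<epsilon>" "\<epsilon> < 1" "0 < \<delta>" "\<delta> < 1"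
    and sens: "norm (c1 - c2) * sqrt (2 * ln (1.25 / \<delta>)) \<le> s * \<epsilon>"
  shows "indist \<epsilon> \<delta> (gauss_at c1 s) (gauss_at c2 s)"
proof (cases "c1 = c2")
  case True
  then show ?thesis
    using assms by (simp add: indist_refl)
next
  case False
  have "0 < norm (c1 - c2) * sqrt (2 * ln (1.25 / \<delta>))"
    using False assms(4,5) by (simp add: field_simps)
  then have "0 < s"
    using sens assms(1,2) by (metis mult_eq_0_iff order_le_less not_less)
  then show ?thesis
    unfolding indist_def
    using measure_gauss_at_le[of s \<epsilon> \<delta> c1 c2] measure_gauss_at_le[of s \<epsilon> \<delta> c2 c1] False assms
    by (simp add: norm_minus_commute)
qed

lemma dist_le_RS:
  assumes "bdd_above (range (\<lambda>z. norm (A0 {} (A R) R - A0 {z} (A (R \<union> {z})) (R \<union> {z}))))"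
  shows "norm (A0 {z} (A (R \<union> {z})) (R \<union> {z}) - A0 {} (A R) R) \<le> RS A A0 R"
proof -
  have "norm (A0 {} (A R) R - A0 {z} (A (R \<union> {z})) (R \<union> {z})) \<le> RS A A0 R"
    unfolding RS_def using assms by (intro cSUP_upper) auto
  then show ?thesis
    by (simp add: norm_minus_commute)
qed

lemma RS_nonneg:
  assumes "bdd_above (range (\<lambda>z. norm (A0 {} (A R) R - A0 {z} (A (R \<union> {z})) (R \<union> {z}))))"
  shows "0 \<le> RS A A0 R"
proof -
  have "norm (A0 {z} (A (R \<union> {z})) (R \<union> {z}) - A0 {} (A R) R) \<le> RS A A0 R" for z
    using assms by (rule dist_le_RS)
  then show ?thesis
    by (rule order_trans[OF norm_ge_zero])
qed

lemma single_deletion_cases: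
  assumes "finite R" "finite U" "U \<inter> R = {}" "card (U \<union> R) \<le> card R + 1"
  obtains "U = {}" | z where "U = {z}"
proof -
  have "card U \<le> 1"
    using assms card_Un_disjoint[of U R] by simp
  then show ?thesis
    using that assms(2) by (metis card_0_eq card_1_singletonE le_eq_less_or_eq less_one)
qed

theorem mainTheorem1:
  fixes A :: "'z set \<Rightarrow> 'a::euclidean_space"
    and A0 :: "'z set \<Rightarrow> 'a \<Rightarrow> 'z set \<Rightarrow> 'a"
    and \<epsilon> \<delta> :: real
  assumes "0 < \<epsilon>" "\<epsilon> < 1" "0 < \<delta>" "\<delta> < 1"
    and "\<And>R. finite R \<Longrightarrow>
           bdd_above (range (\<lambda>z. norm (A0 {} (A R) R - A0 {z} (A (R \<union> {z})) (R \<union> {z}))))"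
  shows "unlearning \<epsilon> \<delta> A
           (gauss_mech A0 (\<lambda>R. RS A A0 R / \<epsilon> * sqrt (2 * ln (1.25 / \<delta>))))"
  unfolding unlearning_def
proof (intro allI impI)
  fix R U :: "'z set"
  assume RU: "finite R \<and> finite U \<and> U \<inter> R = {} \<and> card (U \<union> R) \<le> card R + 1"
  let ?c = "sqrt (2 * ln (1.25 / \<delta>))"
  let ?\<sigma> = "\<lambda>R. RS A A0 R / \<epsilon> * ?c"
  have c_pos: "0 < ?c"
    using assms(3,4) by (simp add: field_simps)
  have "0 \<le> RS A A0 R"
    using RU by (intro RS_nonneg assms(5)) simp
  then have \<sigma>_nonneg: "0 \<le> ?\<sigma> R"
    using assms(1) c_pos by simp
  from RU consider "U = {}" | z where "U = {z}"
    by (metis single_deletion_cases)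
  then show "indist \<epsilon> \<delta> (gauss_mech A0 ?\<sigma> U (A (R \<union> U)) (R \<union> U)) (gauss_mech A0 ?\<sigma> {} (A R) R)"
  proof cases
    case 1
    then show ?thesis
      using assms by (simp add: indist_refl)
  next
    case (2 z)
    then have retain: "(R \<union> {z}) - {z} = R"
      using RU by auto
    have "norm (A0 {z} (A (R \<union> {z})) (R \<union> {z}) - A0 {} (A R) R) \<le> RS A A0 R"
      using RU by (intro dist_le_RS assms(5)) simp
    then have sens: "norm (A0 {z} (A (R \<union> {z})) (R \<union> {z}) - A0 {} (A R) R) * ?c \<le> ?\<sigma> R * \<epsilon>"
      using assms(1) c_pos by (simp add: mult_right_mono)
    show ?thesis
      unfolding 2 gauss_mech_def retain Diff_empty
      by (rule indist_gauss_at[OF \<sigma>_nonneg assms(1-4) sens])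
  qed
qed

end
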